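(* Let $(\mathfrak M,w)=(W,R,V,w)$ be a pointed model, and let $Unr_w(\mathfrak M)=(W',R',V')$ and $Unr^{re}_w(\mathfrak M)=(W',R^*,V')$ be its unravelling and reflexive unravelling from $w$. Then: (1) for every $\varphi\in Form$ and $(s_0,\dots,s_n)\in W'$: $Unr_w(\mathfrak M),(s_0,\dots,s_n)\models\varphi$ iff $\mathfrak M,s_n\models\varphi$; (2) if $R$ is reflexive, then for every $\varphi\in Form$ and $(s_0,\dots,s_n)\in W'$: $Unr^{re}_w(\mathfrak M),(s_0,\dots,s_n)\models\varphi$ iff $\mathfrak M,s_n\models\varphi$; (3) if $\mathfrak M\in\mathcal D_{P-}$, then $Unr_w(\mathfrak M)$ is an interpretation; (4) if $R$ is reflexive, then $Unr^{re}_w(\mathfrak M)$ is an interpretation with reflexive relation.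
   Context: $Form$: $\varphi::=p\mid\bot\mid(\varphi\wedge\varphi)\mid(\varphi\to\varphi)$ over a countable set $P0$. A model is $(W,R,V)$ with $W\neq\emptyset$, $R\subseteq W\times W$, $V:P0\to\wp(W)$. Satisfaction: $\bot$ never true; $p$ true at $s$ iff $s\in V(p)$; $\wedge$ pointwise; $\mathfrak M,s\models\varphi\to\psi$ iff for all $t$ with $sRt$, $\mathfrak M,t\models\varphi$ implies $\mathfrak M,t\models\psi$. For $X\subseteq W$: $-X=W\setminus X$, $R[X]=\{t:\exists s\in X,\ sRt\}$, $R^\Box(X)=\{s:\forall t\,(sRt\Rightarrow t\in X)\}$. A proposition of $(W,R)$ is $X\subseteq W$ with $R[X]\cap R^\Box(R[X])\subseteq X$; an interpretation is a model with every $V(p)$ a proposition. $\mathcal D_{P-}$ is the class of models with $V(p)\subseteq R^\Box(-R^\Box(\emptyset)\cup V(p))$ for all $p\in P0$. Unravelling: $W'$ is the set of finite sequences $(s_0,\dots,s_n)$, $n\in\mathbb N$, of elements of $W$ with $s_0=w$ and $s_iRs_{i+1}$ for $0\le i<n$; $(s_0,\dots,s_n)R'(t_0,\dots,t_m)$ iff $m=n+1$ and $(t_0,\dots,t_n)=(s_0,\dots,s_n)$; $V'(p)=\{(s_0,\dots,s_n)\in W':s_n\in V(p)\}$. $R^*$ is the reflexive closure of $R'$. *)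

theory Defs
  imports Main "HOL-Library.Countable"
begin

datatype 'p form = Var 'p | Bot | Conj "'p form" "'p form" | Imp "'p form" "'p form"

definition is_model :: "'w set \<Rightarrow> ('w \<times> 'w) set \<Rightarrow> ('p \<Rightarrow> 'w set) \<Rightarrow> bool" where
  "is_model W R V \<longleftrightarrow> W \<noteq> {} \<and> R \<subseteq> W \<times> W \<and> (\<forall>p. V p \<subseteq> W)"

fun sat :: "('w \<times> 'w) set \<Rightarrow> ('p \<Rightarrow> 'w set) \<Rightarrow> 'w \<Rightarrow> 'p form \<Rightarrow> bool" where
  "sat R V s (Var p) \<longleftrightarrow> s \<in> V p"
| "sat R V s Bot \<longleftrightarrow> False"
| "sat R V s (Conj a b) \<longleftrightarrow> sat R V s a \<and> sat R V s b"
| "sat R V s (Imp a b) \<longleftrightarrow> (\<forall>t. (s, t) \<in> R \<longrightarrow> sat R V t a \<longrightarrow> sat R V t b)"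

text \<open>R[X] and the box operator R^Box(X) relative to W; complement -X = W - X.\<close>
definition img :: "('w \<times> 'w) set \<Rightarrow> 'w set \<Rightarrow> 'w set" where
  "img R X = {t. \<exists>s\<in>X. (s, t) \<in> R}"

definition boxR :: "'w set \<Rightarrow> ('w \<times> 'w) set \<Rightarrow> 'w set \<Rightarrow> 'w set" where
  "boxR W R X = {s \<in> W. \<forall>t. (s, t) \<in> R \<longrightarrow> t \<in> X}"

definition is_proposition :: "'w set \<Rightarrow> ('w \<times> 'w) set \<Rightarrow> 'w set \<Rightarrow> bool" where
  "is_proposition W R X \<longleftrightarrow> X \<subseteq> W \<and> img R X \<inter> boxR W R (img R X) \<subseteq> X"

definition is_interpretation :: "'w set \<Rightarrow> ('w \<times> 'w) set \<Rightarrow> ('p \<Rightarrow> 'w set) \<Rightarrow> bool" where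
  "is_interpretation W R V \<longleftrightarrow> is_model W R V \<and> (\<forall>p. is_proposition W R (V p))"

definition in_DPminus :: "'w set \<Rightarrow> ('w \<times> 'w) set \<Rightarrow> ('p \<Rightarrow> 'w set) \<Rightarrow> bool" where
  "in_DPminus W R V \<longleftrightarrow> is_model W R V \<and>
     (\<forall>p. V p \<subseteq> boxR W R ((W - boxR W R {}) \<union> V p))"

definition unr_W :: "('w \<times> 'w) set \<Rightarrow> 'w \<Rightarrow> 'w list set" where
  "unr_W R w = {xs. xs \<noteq> [] \<and> hd xs = w \<and>
                    (\<forall>i. Suc i < length xs \<longrightarrow> (xs ! i, xs ! Suc i) \<in> R)}"

definition unr_R :: "('w \<times> 'w) set \<Rightarrow> 'w \<Rightarrow> ('w list \<times> 'w list) set" where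
  "unr_R R w = {(xs, ys). xs \<in> unr_W R w \<and> ys \<in> unr_W R w \<and>
                    length ys = length xs + 1 \<and> take (length xs) ys = xs}"

definition unr_V :: "('w \<times> 'w) set \<Rightarrow> ('p \<Rightarrow> 'w set) \<Rightarrow> 'w \<Rightarrow> 'p \<Rightarrow> 'w list set" where
  "unr_V R V w p = {xs \<in> unr_W R w. last xs \<in> V p}"

definition unr_Rre :: "('w \<times> 'w) set \<Rightarrow> 'w \<Rightarrow> ('w list \<times> 'w list) set" where
  "unr_Rre R w = unr_R R w \<union> Id_on (unr_W R w)"

end

theory Submission
  imports Defs
begin

text \<open>Taking the last element of a sequence is a bounded morphism from the unravelling onto the
original model, and bounded morphisms preserve truth; when R is reflexive the loops added in the
reflexive unravelling are matched by loops of R, so the same holds there. For propositionality,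
every node of the unravelling has at most one proper predecessor, so a node of R'[X] that has a
successor in R'[X] already lies in X; a node of R'[X] without successors ends in a dead end of
the original model, where the D_{P-} condition forces the valuation. In the reflexive case a node
(s_0,...,s_n) of R*[X] has the successor (s_0,...,s_n,s_n), whose only R*-predecessors are
itself and (s_0,...,s_n); one of them lies in X, and either way s_n lies in V p.\<close>

lemma sat_bounded_morphism:
  assumes zig: "\<And>x y. x \<in> A \<Longrightarrow> (x, y) \<in> R' \<Longrightarrow> y \<in> A \<and> (f x, f y) \<in> R"
    and zag: "\<And>x u. x \<in> A \<Longrightarrow> (f x, u) \<in> R \<Longrightarrow> \<exists>y. (x, y) \<in> R' \<and> f y = u"
    and val: "\<And>x p. x \<in> A \<Longrightarrow> x \<in> V' p \<longleftrightarrow> f x \<in> V p"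
  shows "x \<in> A \<Longrightarrow> sat R' V' x \<phi> \<longleftrightarrow> sat R V (f x) \<phi>"
proof (induction \<phi> arbitrary: x)
  case (Imp a b)
  show ?case
  proof
    assume l: "sat R' V' x (Imp a b)"
    show "sat R V (f x) (Imp a b)"
    proof (simp, intro allI impI)
      fix u assume "(f x, u) \<in> R" "sat R V u a"
      then obtain y where "(x, y) \<in> R'" "f y = u" using zag Imp.prems by blast
      then show "sat R V u b" using l Imp zig \<open>sat R V u a\<close> by auto
    qed
  next
    assume "sat R V (f x) (Imp a b)"
    then show "sat R' V' x (Imp a b)" using Imp zig by auto
  qed
qed (simp_all add: val)

lemma unr_W_nonempty: "xs \<in> unr_W R w \<Longrightarrow> xs \<noteq> []"
  by (simp add: unr_W_def)

lemma unr_W_root: "[w] \<in> unr_W R w"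
  by (simp add: unr_W_def)

lemma unr_W_snoc:
  assumes "xs \<noteq> []"
  shows "xs @ [t] \<in> unr_W R w \<longleftrightarrow> xs \<in> unr_W R w \<and> (last xs, t) \<in> R"
proof -
  obtain n where n: "length xs = Suc n" using assms by (cases xs) auto
  have last: "xs ! n = last xs" using n assms by (simp add: last_conv_nth)
  have "(\<forall>i. Suc i < length (xs @ [t]) \<longrightarrow> ((xs @ [t]) ! i, (xs @ [t]) ! Suc i) \<in> R)
      \<longleftrightarrow> (\<forall>i. Suc i < length xs \<longrightarrow> (xs ! i, xs ! Suc i) \<in> R) \<and> (last xs, t) \<in> R"
    (is "(\<forall>i. ?L i) \<longleftrightarrow> (\<forall>i. ?R i) \<and> _")
  proof (intro iffI conjI allI impI)
    fix i assume "\<forall>i. ?L i" and "Suc i < length xs"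
    then have "((xs @ [t]) ! i, (xs @ [t]) ! Suc i) \<in> R" by simp
    then show "(xs ! i, xs ! Suc i) \<in> R" using \<open>Suc i < length xs\<close> by (simp add: nth_append)
  next
    assume "\<forall>i. ?L i"
    then have "((xs @ [t]) ! n, (xs @ [t]) ! Suc n) \<in> R" using n by simp
    then show "(last xs, t) \<in> R" using n last by (simp add: nth_append)
  next
    fix i assume "(\<forall>i. ?R i) \<and> (last xs, t) \<in> R" "Suc i < length (xs @ [t])"
    then show "((xs @ [t]) ! i, (xs @ [t]) ! Suc i) \<in> R"
      using n last by (cases "Suc i < length xs") (auto simp: nth_append less_Suc_eq)
  qed
  then show ?thesis
    using assms by (simp add: unr_W_def)
qed

lemma unr_W_snocI: "xs \<in> unr_W R w \<Longrightarrow> (last xs, t) \<in> R \<Longrightarrow> xs @ [t] \<in> unr_W R w"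
  by (simp add: unr_W_snoc unr_W_nonempty)

lemma unr_R_iff:
  "(xs, ys) \<in> unr_R R w \<longleftrightarrow> xs \<in> unr_W R w \<and> (\<exists>t. ys = xs @ [t] \<and> (last xs, t) \<in> R)"
proof
  assume "(xs, ys) \<in> unr_R R w"
  then have xs: "xs \<in> unr_W R w" and ys: "ys \<in> unr_W R w"
    and len: "length ys = length xs + 1" and pre: "take (length xs) ys = xs"
    by (auto simp: unr_R_def)
  have "length (drop (length xs) ys) = 1" using len by simp
  then obtain t where "drop (length xs) ys = [t]"
    by (cases "drop (length xs) ys") auto
  then have "ys = xs @ [t]" using pre by (metis append_take_drop_id)
  moreover have "(last xs, t) \<in> R"
    using ys \<open>ys = xs @ [t]\<close> by (simp add: unr_W_snoc unr_W_nonempty[OF xs])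
  ultimately show "xs \<in> unr_W R w \<and> (\<exists>t. ys = xs @ [t] \<and> (last xs, t) \<in> R)"
    using xs by blast
next
  assume "xs \<in> unr_W R w \<and> (\<exists>t. ys = xs @ [t] \<and> (last xs, t) \<in> R)"
  then show "(xs, ys) \<in> unr_R R w"
    by (auto simp: unr_R_def unr_W_snocI)
qed

lemma unr_R_subset: "unr_R R w \<subseteq> unr_W R w \<times> unr_W R w"
  by (auto simp: unr_R_def)

lemma unr_Rre_subset: "unr_Rre R w \<subseteq> unr_W R w \<times> unr_W R w"
  using unr_R_subset[of R w] by (auto simp: unr_Rre_def)

lemma unr_R_predecessor_unique:
  "(xs, zs) \<in> unr_R R w \<Longrightarrow> (ys, zs) \<in> unr_R R w \<Longrightarrow> xs = ys"
  by (auto simp: unr_R_iff)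

lemma unr_W_last_mem:
  assumes "xs \<in> unr_W R w" "R \<subseteq> W \<times> W" "w \<in> W"
  shows "last xs \<in> W"
proof (cases xs rule: rev_exhaust)
  case (snoc ys t)
  show ?thesis
  proof (cases "ys = []")
    case True
    then show ?thesis using assms(1,3) snoc by (simp add: unr_W_def)
  next
    case False
    then have "(last ys, t) \<in> R" using assms(1) snoc by (simp add: unr_W_snoc)
    then show ?thesis using assms(2) snoc by auto
  qed
qed (use unr_W_nonempty[OF assms(1)] in simp)

lemma is_model_unr:
  "R' \<subseteq> unr_W R w \<times> unr_W R w \<Longrightarrow> is_model (unr_W R w) R' (unr_V R V w)"
  unfolding is_model_def unr_V_def using unr_W_root[of w R] by blast

lemma sat_unr:
  "xs \<in> unr_W R w \<Longrightarrow> sat (unr_R R w) (unr_V R V w) xs \<phi> \<longleftrightarrow> sat R V (last xs) \<phi>"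
  by (rule sat_bounded_morphism) (auto simp: unr_R_iff unr_V_def unr_W_snocI)

lemma sat_unr_refl:
  assumes "refl_on W R" "R \<subseteq> W \<times> W" "w \<in> W" "xs \<in> unr_W R w"
  shows "sat (unr_Rre R w) (unr_V R V w) xs \<phi> \<longleftrightarrow> sat R V (last xs) \<phi>"
proof (rule sat_bounded_morphism[OF _ _ _ assms(4)])
  fix x y assume "x \<in> unr_W R w" "(x, y) \<in> unr_Rre R w"
  then show "y \<in> unr_W R w \<and> (last x, last y) \<in> R"
    using unr_W_last_mem[OF _ assms(2,3)] refl_onD[OF assms(1)]
    by (auto simp: unr_Rre_def unr_R_iff unr_W_snocI)
qed (auto simp: unr_Rre_def unr_R_iff unr_V_def unr_W_snocI)

lemma is_proposition_unr_V:
  assumes dead_ends: "V p \<subseteq> boxR W R ((W - boxR W R {}) \<union> V p)"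
  shows "is_proposition (unr_W R w) (unr_R R w) (unr_V R V w p)"
proof -
  let ?X = "unr_V R V w p" and ?R' = "unr_R R w"
  have "ys \<in> ?X" if ys: "ys \<in> img ?R' ?X \<inter> boxR (unr_W R w) ?R' (img ?R' ?X)" for ys
  proof -
    obtain xs t where xs: "xs \<in> ?X" and ys_eq: "ys = xs @ [t]" and xs_t: "(last xs, t) \<in> R"
      using IntD1[OF ys] by (auto simp: img_def unr_R_iff)
    have ys_W: "ys \<in> unr_W R w"
      unfolding ys_eq using xs xs_t by (simp add: unr_V_def unr_W_snocI)
    show "ys \<in> ?X"
    proof (cases "\<exists>u. (t, u) \<in> R")
      case True
      then obtain u where "(t, u) \<in> R" by blast
      then have ys_succ: "(ys, ys @ [u]) \<in> ?R'" using ys_W ys_eq by (simp add: unr_R_iff)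
      then have "ys @ [u] \<in> img ?R' ?X" using IntD2[OF ys] by (simp add: boxR_def)
      then obtain zs where zs: "zs \<in> ?X" "(zs, ys @ [u]) \<in> ?R'" by (auto simp: img_def)
      then show ?thesis using unr_R_predecessor_unique[OF zs(2) ys_succ] by simp
    next
      case False
      then have t_dead_end: "t \<notin> W - boxR W R {}" by (simp add: boxR_def)
      have "last xs \<in> V p" using xs by (simp add: unr_V_def)
      then have "last xs \<in> boxR W R ((W - boxR W R {}) \<union> V p)" using dead_ends by blast
      then have "t \<in> (W - boxR W R {}) \<union> V p" using xs_t unfolding boxR_def by blast
      then have "t \<in> V p" using t_dead_end by blast
      then show ?thesis using ys_W ys_eq by (simp add: unr_V_def)
    qed
  qed
  moreover have "?X \<subseteq> unr_W R w" by (auto simp: unr_V_def)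
  ultimately show ?thesis unfolding is_proposition_def by blast
qed

lemma is_proposition_unr_V_refl:
  assumes "refl_on W R" "R \<subseteq> W \<times> W"
  shows "is_proposition (unr_W R w) (unr_Rre R w) (unr_V R V w p)"
proof -
  let ?X = "unr_V R V w p" and ?R' = "unr_Rre R w"
  have "ys \<in> ?X" if ys: "ys \<in> img ?R' ?X \<inter> boxR (unr_W R w) ?R' (img ?R' ?X)" for ys
  proof -
    obtain xs where xs: "xs \<in> ?X" and xs_ys: "(xs, ys) \<in> ?R'"
      using IntD1[OF ys] by (auto simp: img_def)
    show "ys \<in> ?X"
    proof (cases "ys = xs")
      case False
      then obtain t where ys_eq: "ys = xs @ [t]" and xs_t: "(last xs, t) \<in> R"
        using xs_ys by (auto simp: unr_Rre_def unr_R_iff)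
      have ys_W: "ys \<in> unr_W R w"
        unfolding ys_eq using xs xs_t by (simp add: unr_V_def unr_W_snocI)
      have "(t, t) \<in> R" using xs_t assms by (auto intro: refl_onD)
      then have ys_succ: "(ys, ys @ [t]) \<in> unr_R R w"
        using ys_W ys_eq by (simp add: unr_R_iff)
      then have "ys @ [t] \<in> img ?R' ?X" using IntD2[OF ys] by (simp add: boxR_def unr_Rre_def)
      then obtain zs where zs: "zs \<in> ?X" "(zs, ys @ [t]) \<in> ?R'" by (auto simp: img_def)
      then have "zs = ys @ [t] \<or> zs = ys"
        using unr_R_predecessor_unique[OF _ ys_succ] by (auto simp: unr_Rre_def)
      then show ?thesis
        using zs(1) ys_W ys_eq by (auto simp: unr_V_def)
    qed (use xs in simp)
  qed
  moreover have "?X \<subseteq> unr_W R w" by (auto simp: unr_V_def)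
  ultimately show ?thesis unfolding is_proposition_def by blast
qed

theorem mainTheorem15:
  fixes W :: "'w set" and R :: "('w \<times> 'w) set" and V :: "'p::countable \<Rightarrow> 'w set" and w :: 'w
  assumes "is_model W R V" and "w \<in> W"
  shows "(\<forall>(\<phi>::'p form). \<forall>xs\<in>unr_W R w.
            sat (unr_R R w) (unr_V R V w) xs \<phi> \<longleftrightarrow> sat R V (last xs) \<phi>)
       \<and> (refl_on W R \<longrightarrow> (\<forall>(\<phi>::'p form). \<forall>xs\<in>unr_W R w.
            sat (unr_Rre R w) (unr_V R V w) xs \<phi> \<longleftrightarrow> sat R V (last xs) \<phi>))
       \<and> (in_DPminus W R V \<longrightarrow> is_interpretation (unr_W R w) (unr_R R w) (unr_V R V w))
       \<and> (refl_on W R \<longrightarrow> is_interpretation (unr_W R w) (unr_Rre R w) (unr_V R V w)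
                          \<and> refl_on (unr_W R w) (unr_Rre R w))"
proof (intro conjI impI)
  have R_W: "R \<subseteq> W \<times> W" using assms(1) by (simp add: is_model_def)
  show "\<forall>\<phi>. \<forall>xs\<in>unr_W R w. sat (unr_R R w) (unr_V R V w) xs \<phi> \<longleftrightarrow> sat R V (last xs) \<phi>"
    by (simp add: sat_unr)
  show "\<forall>\<phi>. \<forall>xs\<in>unr_W R w. sat (unr_Rre R w) (unr_V R V w) xs \<phi> \<longleftrightarrow> sat R V (last xs) \<phi>"
    if "refl_on W R"
    by (simp add: sat_unr_refl[OF that R_W assms(2)])
  show "is_interpretation (unr_W R w) (unr_R R w) (unr_V R V w)" if "in_DPminus W R V"
    using that unfolding is_interpretation_def in_DPminus_def
    by (auto simp: is_model_unr[OF unr_R_subset] intro: is_proposition_unr_V)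
  show "is_interpretation (unr_W R w) (unr_Rre R w) (unr_V R V w)" if "refl_on W R"
    by (simp add: is_interpretation_def is_model_unr[OF unr_Rre_subset]
        is_proposition_unr_V_refl[OF that R_W])
  show "refl_on (unr_W R w) (unr_Rre R w)"
    by (auto simp: refl_on_def unr_Rre_def)
qed

end
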